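(* Let $S$ denote the sorting problem on $n$ elements. Then $D_1(S,n)=\lceil 3n/2\rceil-2$.
   Context: Sorting problem $S$ on $n$ elements: the input is an assignment of $n$ distinct real numbers $a_1,\dots,a_n$ to $n$ labeled elements (equivalently, a total order on them); a query is a pair $\{i,j\}$ and its answer tells whether $a_i<a_j$; the goal is to determine the increasing order of the elements. $D_k(S,n)$ is defined by the following game between a Questioner and an Adversary. The Adversary chooses an input (the current input). The Questioner, who always knows the current input, asks queries one after another; each query is answered according to the current input. Between queries the Adversary may replace the current input by any other input consistent with all answers given so far, but at most $k$ times in total. The game ends as soon as the answers given determine the increasing order. $D_k(S,n)$ is the number of queries asked when the Questioner minimizes and the Adversary maximizes this number. *)

theory Defs
  imports Complex_Main
begin

text \<open>Inputs for the sorting problem on n labeled elements 0..n-1: assignments of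
  distinct reals. Only values on {..<n} matter.\<close>
definition sort_input :: "nat \<Rightarrow> (nat \<Rightarrow> real) \<Rightarrow> bool" where
  "sort_input n a \<longleftrightarrow> inj_on a {..<n}"

text \<open>Answers given so far are recorded as a set R of pairs (i,j) meaning a_i < a_j.\<close>
definition consistent :: "nat \<Rightarrow> (nat \<times> nat) set \<Rightarrow> (nat \<Rightarrow> real) \<Rightarrow> bool" where
  "consistent n R a \<longleftrightarrow> sort_input n a \<and> (\<forall>(i,j)\<in>R. a i < a j)"

definition determined :: "nat \<Rightarrow> (nat \<times> nat) set \<Rightarrow> bool" where
  "determined n R \<longleftrightarrow> (\<forall>a b. consistent n R a \<longrightarrow> consistent n R b \<longrightarrow>
      (\<forall>i<n. \<forall>j<n. (a i < a j) = (b i < b j)))"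

definition answer :: "(nat \<Rightarrow> real) \<Rightarrow> nat \<Rightarrow> nat \<Rightarrow> nat \<times> nat" where
  "answer a i j = (if a i < a j then (i, j) else (j, i))"

text \<open>win n m R a k: it is the Questioner's turn, the answers so far are R, the current input
  is a, the Adversary has at most k changes left; then the Questioner can force the game to end
  after at most m further queries. After each answer the Adversary may keep the input or
  (using one change) replace it by another input consistent with all answers so far.\<close>
fun win :: "nat \<Rightarrow> nat \<Rightarrow> (nat \<times> nat) set \<Rightarrow> (nat \<Rightarrow> real) \<Rightarrow> nat \<Rightarrow> bool" where
  "win n 0 R a k = determined n R"
| "win n (Suc m) R a k = (determined n R \<or>
     (\<exists>i<n. \<exists>j<n. i \<noteq> j \<and>
        (let R' = insert (answer a i j) R in
           win n m R' a k \<and>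
           (\<forall>b. 0 < k \<and> consistent n R' b \<and> b \<noteq> a \<longrightarrow> win n m R' b (k - 1)))))"

definition D :: "nat \<Rightarrow> nat \<Rightarrow> nat" where
  "D k n = (LEAST m. \<forall>a. sort_input n a \<longrightarrow> win n m {} a k)"

end

theory Submission
  imports Defs
begin

text \<open>Call \<open>(i, j)\<close> adjacent for an input \<open>b\<close> if \<open>b i < b j\<close> and no value of \<open>b\<close> lies
  strictly between them. The answers \<open>R\<close> determine the order exactly when they contain all
  \<open>n - 1\<close> adjacent pairs of a consistent input, so without changes the Questioner needs precisely
  as many more queries as there are adjacent pairs not yet answered.

  Upper bound: the Questioner queries the consecutive pairs of the current input in sorted order.
  If the Adversary changes the input after \<open>t\<close> of these queries, the \<open>t\<close> links of the chain
  are still increasing; a link that is not adjacent in the new input contains one of the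
  \<open>n - 1 - t\<close> unqueried elements, and different links contain different ones. Hence at most
  \<open>(n - 1 - t) + min t (n - 1 - t)\<close> queries remain, i.e. \<open>n - 1 + (n - 1) div 2\<close> in total.

  Lower bound: a set \<open>R\<close> of comparisons on \<open>V\<close> consistent with some input has a consistent
  input in which at most \<open>2 |R| + 1 - |V|\<close> pairs of \<open>R\<close> are adjacent: an element untouched by
  \<open>R\<close> can be inserted into an adjacent pair of \<open>R\<close>, and otherwise \<open>|V| \<le> 2 |R|\<close> and a
  minimal element is put below everything. So once \<open>(n - 1) div 2\<close> answers are known the
  Adversary switches to an input in which no answered pair is adjacent, forcing \<open>n - 1\<close> more
  queries.\<close>

section \<open>Adjacent pairs\<close>

definition adjacent_pairs :: "nat set \<Rightarrow> (nat \<Rightarrow> real) \<Rightarrow> (nat \<times> nat) set" where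
  "adjacent_pairs V b =
     {(i, j). i \<in> V \<and> j \<in> V \<and> b i < b j \<and> \<not> (\<exists>k\<in>V. b i < b k \<and> b k < b j)}"

lemma adjacent_pairs_subset: "adjacent_pairs V b \<subseteq> V \<times> V"
  by (auto simp: adjacent_pairs_def)

lemma finite_adjacent_pairs: "finite V \<Longrightarrow> finite (adjacent_pairs V b)"
  using adjacent_pairs_subset finite_subset by blast

lemma adjacent_pairs_cong:
  "(\<And>k. k \<in> V \<Longrightarrow> b k = c k) \<Longrightarrow> adjacent_pairs V b = adjacent_pairs V c"
  by (auto simp: adjacent_pairs_def)

lemma adjacent_pairs_fun_upd_subset:
  "x \<notin> V \<Longrightarrow> adjacent_pairs (insert x V) (b(x := v)) \<inter> V \<times> V \<subseteq> adjacent_pairs V b"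
  by (auto simp: adjacent_pairs_def split: if_splits)

lemma not_adjacent_if_between:
  "k \<in> V \<Longrightarrow> b i < b k \<Longrightarrow> b k < b j \<Longrightarrow> (i, j) \<notin> adjacent_pairs V b"
  by (auto simp: adjacent_pairs_def)

lemma inj_on_fst_adjacent_pairs:
  assumes "inj_on b V"
  shows "inj_on fst (adjacent_pairs V b)"
proof (rule inj_onI)
  fix p p' assume "p \<in> adjacent_pairs V b" "p' \<in> adjacent_pairs V b" "fst p = fst p'"
  moreover obtain i j j' where "p = (i, j)" "p' = (i, j')"
    using \<open>fst p = fst p'\<close> by (metis prod.collapse)
  ultimately have "\<not> b j < b j'" "\<not> b j' < b j" "j \<in> V" "j' \<in> V"
    by (auto simp: adjacent_pairs_def)
  then show "p = p'"
    using assms \<open>p = (i, j)\<close> \<open>p' = (i, j')\<close> by (auto simp: inj_on_def)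
qed

lemma fst_adjacent_pairs:
  assumes "finite V"
  shows "fst ` adjacent_pairs V b = {i \<in> V. \<exists>k\<in>V. b i < b k}"
proof
  show "{i \<in> V. \<exists>k\<in>V. b i < b k} \<subseteq> fst ` adjacent_pairs V b"
  proof clarify
    fix i k assume "i \<in> V" "k \<in> V" "b i < b k"
    then obtain j where "j \<in> V" "b i < b j" and least: "\<not> (\<exists>k\<in>V. b i < b k \<and> b k < b j)"
      using ex_min_if_finite[of "b ` {k \<in> V. b i < b k}"] assms by fastforce
    then have "(i, j) \<in> adjacent_pairs V b"
      using \<open>i \<in> V\<close> by (auto simp: adjacent_pairs_def)
    then show "i \<in> fst ` adjacent_pairs V b" by force
  qed
qed (auto simp: adjacent_pairs_def)

lemma card_adjacent_pairs:
  assumes "finite V" "inj_on b V"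
  shows "card (adjacent_pairs V b) = card V - 1"
proof (cases "V = {}")
  case False
  then have "Max (b ` V) \<in> b ` V"
    using assms(1) by simp
  then obtain m where "m \<in> V" "b m = Max (b ` V)"
    by auto
  then have max: "b k \<le> b m" if "k \<in> V" for k
    using assms(1) that by simp
  have "{i \<in> V. \<exists>k\<in>V. b i < b k} = V - {m}"
  proof (intro equalityI subsetI)
    fix i assume "i \<in> {i \<in> V. \<exists>k\<in>V. b i < b k}"
    then show "i \<in> V - {m}"
      using max by force
  next
    fix i assume i: "i \<in> V - {m}"
    then have "b i \<noteq> b m"
      using assms(2) \<open>m \<in> V\<close> by (auto simp: inj_on_def)
    then have "b i < b m"
      using i max[of i] by simp
    then show "i \<in> {i \<in> V. \<exists>k\<in>V. b i < b k}"
      using i \<open>m \<in> V\<close> by auto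
  qed
  then have "fst ` adjacent_pairs V b = V - {m}"
    using fst_adjacent_pairs[OF assms(1)] by simp
  then show ?thesis
    using card_image[OF inj_on_fst_adjacent_pairs[OF assms(2)]] \<open>m \<in> V\<close> assms(1) by simp
qed (simp add: adjacent_pairs_def)

lemma less_if_adjacent_pairs_less:
  fixes c :: "nat \<Rightarrow> 'a::order"
  assumes "finite V" and adj: "\<And>i j. (i, j) \<in> adjacent_pairs V b \<Longrightarrow> c i < c j"
  shows "i \<in> V \<Longrightarrow> j \<in> V \<Longrightarrow> b i < b j \<Longrightarrow> c i < c j"
proof (induction "card {k \<in> V. b i < b k \<and> b k < b j}" arbitrary: i j rule: less_induct)
  case less
  show ?case
  proof (cases "\<exists>k\<in>V. b i < b k \<and> b k < b j")
    case True
    then obtain k where k: "k \<in> V" "b i < b k" "b k < b j" by blast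
    have "card {l \<in> V. b i < b l \<and> b l < b k} < card {l \<in> V. b i < b l \<and> b l < b j}"
      "card {l \<in> V. b k < b l \<and> b l < b j} < card {l \<in> V. b i < b l \<and> b l < b j}"
      by (rule psubset_card_mono; use assms(1) k in auto)+
    then have "c i < c k" "c k < c j"
      using less k by blast+
    then show ?thesis by simp
  next
    case False
    then show ?thesis using less.prems adj by (auto simp: adjacent_pairs_def)
  qed
qed

lemma adjacent_swap_preserves_order:
  assumes adj: "(i, j) \<in> adjacent_pairs V b" and "inj_on b V" "p \<in> V" "q \<in> V" "{p, q} \<noteq> {i, j}"
  shows "(b(i := b j, j := b i)) p < (b(i := b j, j := b i)) q \<longleftrightarrow> b p < b q"
proof -
  have ij: "b i < b j" "i \<in> V" "j \<in> V" and gap: "\<And>k. k \<in> V \<Longrightarrow> \<not> (b i < b k \<and> b k < b j)"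
    using adj by (auto simp: adjacent_pairs_def)
  have outside: "(b k < b i \<longleftrightarrow> b k < b j) \<and> (b i < b k \<longleftrightarrow> b j < b k)"
    if "k \<in> V" "k \<noteq> i" "k \<noteq> j" for k
  proof -
    have "b k \<noteq> b i" "b k \<noteq> b j"
      using \<open>inj_on b V\<close> that ij by (auto simp: inj_on_def)
    then show ?thesis
      using gap[OF that(1)] ij(1) by argo
  qed
  have "\<not> (p = i \<and> q = j)" "\<not> (p = j \<and> q = i)"
    using \<open>{p, q} \<noteq> {i, j}\<close> by auto
  then show ?thesis
    using outside[OF \<open>p \<in> V\<close>] outside[OF \<open>q \<in> V\<close>] ij(1)
    by (cases "p = i"; cases "p = j"; cases "q = i"; cases "q = j") (force simp: fun_upd_def)+
qed

lemma inj_on_fun_upd_swap: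
  assumes "inj_on b V" "i \<in> V" "j \<in> V"
  shows "inj_on (b(i := b j, j := b i)) V"
proof (rule inj_onI)
  fix x y assume "x \<in> V" "y \<in> V" "(b(i := b j, j := b i)) x = (b(i := b j, j := b i)) y"
  then show "x = y"
    using assms unfolding inj_on_def fun_upd_apply by (metis (full_types))
qed

lemma adjacent_pairs_subset_if_determined:
  assumes "determined n R" "consistent n R b" "R \<subseteq> {..<n} \<times> {..<n}"
  shows "adjacent_pairs {..<n} b \<subseteq> R"
proof (rule ccontr)
  have inj: "inj_on b {..<n}" and R_less: "\<And>p q. (p, q) \<in> R \<Longrightarrow> b p < b q"
    using assms(2) by (auto simp: consistent_def sort_input_def)
  assume "\<not> adjacent_pairs {..<n} b \<subseteq> R"
  then obtain i j where ij: "(i, j) \<in> adjacent_pairs {..<n} b" "(i, j) \<notin> R"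
    by auto
  then have ijn: "i < n" "j < n" "b i < b j"
    by (auto simp: adjacent_pairs_def)
  define b' where "b' = b(i := b j, j := b i)"
  have "inj_on b' {..<n}"
    using inj_on_fun_upd_swap[OF inj] ijn unfolding b'_def by simp
  moreover have "b' p < b' q" if "(p, q) \<in> R" for p q
  proof -
    have "{p, q} \<noteq> {i, j}"
      using that ij(2) R_less[OF that] ijn(3) by (auto simp: doubleton_eq_iff)
    moreover have "p \<in> {..<n}" "q \<in> {..<n}"
      using assms(3) that by auto
    ultimately show ?thesis
      using adjacent_swap_preserves_order[OF ij(1) inj] R_less[OF that]
      unfolding b'_def by blast
  qed
  ultimately have "consistent n R b'"
    by (auto simp: consistent_def sort_input_def)
  then have "b i < b j \<longleftrightarrow> b' i < b' j"
    using assms(1,2) ijn unfolding determined_def by blast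
  then show False
    using ijn unfolding b'_def by (cases "i = j") auto
qed

lemma determined_if_adjacent_pairs_subset:
  assumes "adjacent_pairs {..<n} b \<subseteq> R" "consistent n R b"
  shows "determined n R"
proof -
  have "b i < b j \<longleftrightarrow> c i < c j" if c: "consistent n R c" and "i < n" "j < n" for c i j
  proof -
    have c_adj: "c p < c q" if "(p, q) \<in> adjacent_pairs {..<n} b" for p q
      using assms(1) c that by (auto simp: consistent_def)
    have "i = j \<or> b i \<noteq> b j"
      using assms(2) \<open>i < n\<close> \<open>j < n\<close> by (auto simp: consistent_def sort_input_def inj_on_def)
    then have "i = j \<or> b i < b j \<or> b j < b i"
      by (auto simp: linorder_neq_iff)
    moreover have "c i < c j" if "b i < b j"
      using less_if_adjacent_pairs_less[of "{..<n}" b c, OF _ c_adj] \<open>i < n\<close> \<open>j < n\<close> that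
      by blast
    moreover have "c j < c i" if "b j < b i"
      using less_if_adjacent_pairs_less[of "{..<n}" b c, OF _ c_adj] \<open>i < n\<close> \<open>j < n\<close> that
      by blast
    ultimately show ?thesis
      by auto
  qed
  then show ?thesis
    using assms(2) unfolding determined_def by blast
qed

lemma determined_iff_adjacent_pairs_subset:
  assumes "consistent n R b" "R \<subseteq> {..<n} \<times> {..<n}"
  shows "determined n R \<longleftrightarrow> adjacent_pairs {..<n} b \<subseteq> R"
  using adjacent_pairs_subset_if_determined determined_if_adjacent_pairs_subset assms by blast

section \<open>Games without changes\<close>

lemma consistent_insert_answer:
  assumes "consistent n R b" "i < n" "j < n" "i \<noteq> j"
  shows "consistent n (insert (answer b i j) R) b"
proof -
  have "b i \<noteq> b j"
    using assms by (auto simp: consistent_def sort_input_def inj_on_def)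
  then show ?thesis
    using assms by (auto simp: consistent_def answer_def)
qed

lemma answer_in_square: "i < n \<Longrightarrow> j < n \<Longrightarrow> answer b i j \<in> {..<n} \<times> {..<n}"
  by (simp add: answer_def)

lemma win_if_determined: "determined n R \<Longrightarrow> win n m R a k"
  by (cases m) auto

lemma win_Suc_without_change:
  "win n (Suc m) R a 0 \<longleftrightarrow>
     determined n R \<or> (\<exists>i<n. \<exists>j<n. i \<noteq> j \<and> win n m (insert (answer a i j) R) a 0)"
  by (simp add: Let_def)

lemma win_Suc_one_change:
  "win n (Suc m) R a 1 \<longleftrightarrow> determined n R \<or>
     (\<exists>i<n. \<exists>j<n. i \<noteq> j \<and> win n m (insert (answer a i j) R) a 1 \<and>
        (\<forall>b. consistent n (insert (answer a i j) R) b \<and> b \<noteq> a \<longrightarrow>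
           win n m (insert (answer a i j) R) b 0))"
  by (simp add: Let_def)

lemma win_without_change_iff:
  assumes "consistent n R b" "R \<subseteq> {..<n} \<times> {..<n}"
  shows "win n m R b 0 \<longleftrightarrow> card (adjacent_pairs {..<n} b - R) \<le> m"
  using assms
proof (induction m arbitrary: R)
  case 0
  then show ?case
    using determined_iff_adjacent_pairs_subset[OF 0] finite_adjacent_pairs[of "{..<n}" b] by auto
next
  case (Suc m)
  let ?A = "adjacent_pairs {..<n} b"
  have IH: "win n m (insert (answer b i j) R) b 0 \<longleftrightarrow> card (?A - insert (answer b i j) R) \<le> m"
    if "i < n" "j < n" "i \<noteq> j" for i j
    using Suc.IH consistent_insert_answer[OF Suc.prems(1) that] answer_in_square[OF that(1,2)]
      Suc.prems(2) by blast
  have fin: "finite (?A - S)" for S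
    by (simp add: finite_adjacent_pairs)
  show ?case
  proof
    assume "win n (Suc m) R b 0"
    then consider "determined n R"
      | i j where "i < n" "j < n" "i \<noteq> j" "win n m (insert (answer b i j) R) b 0"
      unfolding win_Suc_without_change by blast
    then show "card (?A - R) \<le> Suc m"
    proof cases
      case 1
      then have "?A - R = {}"
        using determined_iff_adjacent_pairs_subset[OF Suc.prems] by blast
      then show ?thesis
        by (metis card.empty le0)
    next
      case 2
      have "card (?A - R) \<le> card (insert (answer b i j) (?A - insert (answer b i j) R))"
        by (rule card_mono) (auto simp: fin)
      also have "\<dots> \<le> Suc (card (?A - insert (answer b i j) R))"
        by (simp add: card_insert_if fin)
      finally show ?thesis
        using IH 2 by simp
    qed
  next
    assume le: "card (?A - R) \<le> Suc m"
    show "win n (Suc m) R b 0"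
    proof (cases "?A \<subseteq> R")
      case True
      then show ?thesis
        using determined_iff_adjacent_pairs_subset[OF Suc.prems] win_if_determined by blast
    next
      case False
      then obtain i j where ij: "(i, j) \<in> ?A" "(i, j) \<notin> R"
        by auto
      then have "i < n" "j < n" "b i < b j"
        by (auto simp: adjacent_pairs_def)
      then have ans: "answer b i j = (i, j)" and "i \<noteq> j"
        by (auto simp: answer_def)
      have "?A - insert (i, j) R = (?A - R) - {(i, j)}"
        by auto
      then have "card (?A - insert (i, j) R) = card (?A - R) - 1"
        using ij fin[of R] by simp
      then have "win n m (insert (answer b i j) R) b 0"
        using IH[OF \<open>i < n\<close> \<open>j < n\<close> \<open>i \<noteq> j\<close>] le ans by simp
      then show ?thesis
        unfolding win_Suc_without_change using \<open>i < n\<close> \<open>j < n\<close> \<open>i \<noteq> j\<close> by blast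
    qed
  qed
qed

section \<open>Upper bound: querying the sorted chain\<close>

definition chain_pairs :: "(nat \<Rightarrow> nat) \<Rightarrow> nat \<Rightarrow> (nat \<times> nat) set" where
  "chain_pairs x t = (\<lambda>s. (x s, x (Suc s))) ` {..<t}"

lemma chain_pairs_0 [simp]: "chain_pairs x 0 = {}"
  by (simp add: chain_pairs_def)

lemma chain_pairs_Suc: "chain_pairs x (Suc t) = insert (x t, x (Suc t)) (chain_pairs x t)"
  by (simp add: chain_pairs_def lessThan_Suc)

lemma card_chain_pairs: "inj_on x {..t} \<Longrightarrow> card (chain_pairs x t) = t"
  unfolding chain_pairs_def
  by (subst card_image) (auto simp: inj_on_def)

lemma chain_le:
  fixes f :: "nat \<Rightarrow> 'a::order"
  assumes "\<And>s. s < t \<Longrightarrow> f s < f (Suc s)" "s \<le> s'" "s' \<le> t"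
  shows "f s \<le> f s'"
  using assms(2,3)
proof (induction s')
  case (Suc s')
  show ?case
  proof (cases "s = Suc s'")
    case False
    then have "f s \<le> f s'"
      using Suc by simp
    moreover have "f s' < f (Suc s')"
      using assms(1) Suc.prems(2) by simp
    ultimately show ?thesis
      by (meson order.strict_trans1 order.strict_implies_order)
  qed simp
qed simp

lemma chain_link_contains_unvisited:
  assumes "x ` {..t} \<subseteq> V" and incr: "\<And>s. s < t \<Longrightarrow> b (x s) < b (x (Suc s))"
    and "s < t" "(x s, x (Suc s)) \<notin> adjacent_pairs V b"
  shows "\<exists>k \<in> V - x ` {..t}. b (x s) < b k \<and> b k < b (x (Suc s))"
proof -
  have "x s \<in> V" "x (Suc s) \<in> V"
    using assms(1,3) by auto
  then obtain k where k: "k \<in> V" "b (x s) < b k" "b k < b (x (Suc s))"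
    using incr[OF \<open>s < t\<close>] assms(4) by (auto simp: adjacent_pairs_def)
  have mono: "b (x r) \<le> b (x r')" if "r \<le> r'" "r' \<le> t" for r r'
    using chain_le[of t "\<lambda>s. b (x s)" r r'] incr that by simp
  have "k \<notin> x ` {..t}"
  proof
    assume "k \<in> x ` {..t}"
    then obtain r where "r \<le> t" "k = x r"
      by auto
    then show False
      using k mono[of r s] mono[of "Suc s" r] \<open>s < t\<close> by (cases "r \<le> s") auto
  qed
  then show ?thesis
    using k by blast
qed

lemma card_chain_pairs_diff_adjacent_pairs:
  assumes "finite V" "x ` {..t} \<subseteq> V" "inj_on x {..t}"
    and incr: "\<And>s. s < t \<Longrightarrow> b (x s) < b (x (Suc s))"
  shows "card (chain_pairs x t - adjacent_pairs V b) \<le> card V - Suc t"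
proof -
  let ?link = "\<lambda>s. (x s, x (Suc s))"
  define Bad where "Bad = {s. s < t \<and> ?link s \<notin> adjacent_pairs V b}"
  obtain w where w: "\<And>s. s \<in> Bad \<Longrightarrow>
      w s \<in> V - x ` {..t} \<and> b (x s) < b (w s) \<and> b (w s) < b (x (Suc s))"
    using chain_link_contains_unvisited[OF assms(2) incr] unfolding Bad_def by (metis mem_Collect_eq)
  have w_less: "b (w s) < b (w s')" if "s \<in> Bad" "s' \<in> Bad" "s < s'" for s s'
  proof -
    have "s' \<le> t"
      using that(2) by (simp add: Bad_def)
    then have "b (x (Suc s)) \<le> b (x s')"
      using chain_le[of t "\<lambda>s. b (x s)" "Suc s" s'] incr that(3) by simp
    then show ?thesis
      using w[OF that(1)] w[OF that(2)] by linarith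
  qed
  have "inj_on w Bad"
    by (rule inj_onI) (metis w_less linorder_neqE_nat less_irrefl)
  then have "card Bad \<le> card (V - x ` {..t})"
    using w assms(1) by (intro card_inj_on_le) auto
  also have "\<dots> = card V - Suc t"
    using assms(1-3) by (simp add: card_Diff_subset card_image)
  finally have "card Bad \<le> card V - Suc t" .
  have "card (chain_pairs x t - adjacent_pairs V b) \<le> card (?link ` Bad)"
    by (rule card_mono) (auto simp: chain_pairs_def Bad_def)
  also have "\<dots> \<le> card Bad"
    by (rule card_image_le) (simp add: Bad_def)
  finally show ?thesis
    using \<open>card Bad \<le> card V - Suc t\<close> by simp
qed

lemma card_adjacent_pairs_diff_chain_pairs:
  assumes "finite V" "inj_on b V" "t < card V" "x ` {..t} \<subseteq> V" "inj_on x {..t}"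
    and "\<And>s. s < t \<Longrightarrow> b (x s) < b (x (Suc s))"
  shows "card (adjacent_pairs V b - chain_pairs x t) \<le> (card V - 1 - t) + min t (card V - 1 - t)"
proof -
  let ?A = "adjacent_pairs V b" and ?C = "chain_pairs x t"
  have "card ?C = card (?C \<inter> ?A) + card (?C - ?A)"
    by (rule card_Int_Diff) (simp add: chain_pairs_def)
  moreover have "card (?A - ?C) = card ?A - card (?A \<inter> ?C)"
    by (rule card_Diff_subset_Int) (simp add: finite_adjacent_pairs assms(1))
  moreover have "card ?A = card V - 1" "card ?C = t"
    using card_adjacent_pairs[OF assms(1,2)] card_chain_pairs[OF assms(5)] by simp_all
  moreover have "card (?C - ?A) \<le> card V - Suc t"
    using card_chain_pairs_diff_adjacent_pairs[OF assms(1,4,5,6)] .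
  ultimately show ?thesis
    using assms(3) by (simp add: Int_commute)
qed

lemma obtain_sorted_enumeration:
  fixes a :: "nat \<Rightarrow> 'a::linorder"
  assumes "inj_on a {..<n}"
  obtains x where "bij_betw x {..<n} {..<n}" "\<And>s. Suc s < n \<Longrightarrow> a (x s) < a (x (Suc s))"
proof -
  let ?xs = "sort_key a [0..<n]"
  have "bij_betw ((!) ?xs) {..<n} {..<n}"
    by (rule bij_betw_nth) auto
  moreover have "a (?xs ! s) < a (?xs ! Suc s)" if "Suc s < n" for s
  proof -
    have "a (?xs ! s) \<le> a (?xs ! Suc s)"
      using sorted_nth_mono[OF sorted_sort_key[of a "[0..<n]"], of s "Suc s"] that by simp
    moreover have "?xs ! s \<noteq> ?xs ! Suc s" "?xs ! s < n" "?xs ! Suc s < n"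
      using that nth_eq_iff_index_eq[of ?xs s "Suc s"] nth_mem[of s ?xs] nth_mem[of "Suc s" ?xs]
      by auto
    ultimately show ?thesis
      using assms by (auto simp: inj_on_def order.order_iff_strict)
  qed
  ultimately show thesis
    using that by blast
qed

lemma chain_pairs_in_square:
  "bij_betw x {..<n} {..<n} \<Longrightarrow> t < n \<Longrightarrow> chain_pairs x t \<subseteq> {..<n} \<times> {..<n}"
  using bij_betw_apply by (fastforce simp: chain_pairs_def)

lemma card_adjacent_pairs_diff_chain_pairs_consistent:
  assumes "bij_betw x {..<n} {..<n}" "t < n" "consistent n (chain_pairs x t) b"
  shows "card (adjacent_pairs {..<n} b - chain_pairs x t) \<le> (n - 1 - t) + min t (n - 1 - t)"
proof -
  have "{..t} \<subseteq> {..<n}"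
    using assms(2) by auto
  then have "x ` {..t} \<subseteq> {..<n}" "inj_on x {..t}"
    using bij_betw_imp_surj_on[OF assms(1)] inj_on_subset[OF bij_betw_imp_inj_on[OF assms(1)]]
    by auto
  moreover have "inj_on b {..<n}" "\<And>s. s < t \<Longrightarrow> b (x s) < b (x (Suc s))"
    using assms(3) by (auto simp: consistent_def sort_input_def chain_pairs_def)
  ultimately show ?thesis
    using card_adjacent_pairs_diff_chain_pairs[of "{..<n}" b t x] assms(2) by simp
qed

lemma win_by_querying_sorted_chain:
  assumes a: "inj_on a {..<n}" and x: "bij_betw x {..<n} {..<n}"
    and incr: "\<And>s. Suc s < n \<Longrightarrow> a (x s) < a (x (Suc s))" and "t < n"
  shows "win n (n - 1 + (n - 1) div 2 - t) (chain_pairs x t) a 1"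
proof -
  have a_consistent: "consistent n (chain_pairs x u) a" if "u < n" for u
    using that a incr by (auto simp: consistent_def sort_input_def chain_pairs_def)
  have "n - 1 < n" "t \<le> n - 1"
    using \<open>t < n\<close> by simp_all
  from \<open>t \<le> n - 1\<close> show ?thesis
  proof (induction rule: inc_induct)
    case base
    have "adjacent_pairs {..<n} a \<subseteq> chain_pairs x (n - 1)"
      using card_adjacent_pairs_diff_chain_pairs_consistent[OF x \<open>n - 1 < n\<close> a_consistent]
        finite_adjacent_pairs[of "{..<n}" a] \<open>n - 1 < n\<close> by simp
    then show ?case
      using determined_iff_adjacent_pairs_subset[OF a_consistent chain_pairs_in_square[OF x]]
        win_if_determined \<open>n - 1 < n\<close> by blast
  next
    case (step t)
    let ?M = "n - 1 + (n - 1) div 2 - Suc t"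
    have "Suc t < n"
      using step.hyps by simp
    have "win n ?M (chain_pairs x (Suc t)) b 0" if "consistent n (chain_pairs x (Suc t)) b" for b
    proof -
      have "min (Suc t) (n - 1 - Suc t) \<le> (n - 1) div 2"
        by linarith
      then have "card (adjacent_pairs {..<n} b - chain_pairs x (Suc t)) \<le> ?M"
        using card_adjacent_pairs_diff_chain_pairs_consistent[OF x \<open>Suc t < n\<close> that] by linarith
      then show ?thesis
        using win_without_change_iff[OF that chain_pairs_in_square[OF x \<open>Suc t < n\<close>]] by simp
    qed
    moreover have "answer a (x t) (x (Suc t)) = (x t, x (Suc t))"
      using incr \<open>Suc t < n\<close> by (simp add: answer_def)
    moreover have "x t < n" "x (Suc t) < n" "x t \<noteq> x (Suc t)"
      using bij_betw_apply[OF x] inj_onD[OF bij_betw_imp_inj_on[OF x], of t "Suc t"] \<open>Suc t < n\<close>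
      by auto
    moreover have M_Suc: "n - 1 + (n - 1) div 2 - t = Suc ?M"
      using \<open>Suc t < n\<close> by simp
    ultimately show ?case
      using step.IH unfolding M_Suc win_Suc_one_change chain_pairs_Suc
      by (intro disjI2 exI[of _ "x t"] exI[of _ "x (Suc t)"]) auto
  qed
qed

lemma win_upper_bound:
  assumes "sort_input n a"
  shows "win n (n - 1 + (n - 1) div 2) {} a 1"
proof (cases "n = 0")
  case True
  then show ?thesis
    by (simp add: determined_def)
next
  case False
  obtain x where "bij_betw x {..<n} {..<n}" "\<And>s. Suc s < n \<Longrightarrow> a (x s) < a (x (Suc s))"
    using obtain_sorted_enumeration assms unfolding sort_input_def by blast
  then show ?thesis
    using win_by_querying_sorted_chain[of a n x 0] assms False by (simp add: sort_input_def)
qed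

section \<open>Lower bound: switching to an input with few answered adjacent pairs\<close>

lemma inj_on_fun_upd_insert:
  assumes "inj_on b V" "x \<notin> V" "v \<notin> b ` V"
  shows "inj_on (b(x := v)) (insert x V)"
proof -
  have "(b(x := v)) ` V = b ` V"
    using assms(2) by auto
  then show ?thesis
    using assms by (simp add: inj_on_fun_updI)
qed

lemma extension_at_isolated_point:
  assumes "finite V" "x \<notin> V" "R \<subseteq> V \<times> V" "inj_on b V" "\<forall>(i, j)\<in>R. b i < b j"
  obtains v where "inj_on (b(x := v)) (insert x V)" "\<forall>(i, j)\<in>R. (b(x := v)) i < (b(x := v)) j"
    "card (R \<inter> adjacent_pairs (insert x V) (b(x := v))) \<le> card (R \<inter> adjacent_pairs V b) - 1"
proof -
  have less: "\<forall>(i, j)\<in>R. (b(x := v)) i < (b(x := v)) j" for v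
  proof clarify
    fix i j assume "(i, j) \<in> R"
    then have "i \<noteq> x" "j \<noteq> x"
      using assms(2,3) by auto
    then show "(b(x := v)) i < (b(x := v)) j"
      using assms(5) \<open>(i, j) \<in> R\<close> by auto
  qed
  have sub: "R \<inter> adjacent_pairs (insert x V) (b(x := v)) \<subseteq> R \<inter> adjacent_pairs V b" for v
    using adjacent_pairs_fun_upd_subset[OF assms(2)] assms(3) by blast
  have fin: "finite (R \<inter> adjacent_pairs V b)"
    using assms(1) finite_adjacent_pairs by blast
  show thesis
  proof (cases "R \<inter> adjacent_pairs V b = {}")
    case True
    obtain v :: real where "v \<notin> b ` V"
      using ex_new_if_finite[OF infinite_UNIV_char_0] assms(1) by blast
    moreover have "R \<inter> adjacent_pairs (insert x V) (b(x := v)) = {}"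
      using sub[of v] True by blast
    ultimately show thesis
      using that[OF inj_on_fun_upd_insert[OF assms(4,2)] less] by simp
  next
    case False
    then obtain i j where ij: "(i, j) \<in> R" "(i, j) \<in> adjacent_pairs V b"
      by auto
    define v where "v = (b i + b j) / 2"
    have "b i < v" "v < b j"
      using ij(2) by (auto simp: adjacent_pairs_def v_def)
    then have "v \<notin> b ` V"
      using ij(2) by (auto simp: adjacent_pairs_def)
    have "i \<noteq> x" "j \<noteq> x"
      using ij(1) assms(2,3) by auto
    then have "(b(x := v)) i < (b(x := v)) x" "(b(x := v)) x < (b(x := v)) j"
      using \<open>b i < v\<close> \<open>v < b j\<close> by simp_all
    then have "(i, j) \<notin> adjacent_pairs (insert x V) (b(x := v))"
      using not_adjacent_if_between[of x "insert x V"] by blast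
    then have "R \<inter> adjacent_pairs (insert x V) (b(x := v)) \<subseteq> (R \<inter> adjacent_pairs V b) - {(i, j)}"
      using sub by blast
    then have "card (R \<inter> adjacent_pairs (insert x V) (b(x := v)))
        \<le> card ((R \<inter> adjacent_pairs V b) - {(i, j)})"
      using card_mono[OF finite_Diff[OF fin]] by blast
    also have "\<dots> = card (R \<inter> adjacent_pairs V b) - 1"
      using ij fin by simp
    finally show thesis
      using that[OF inj_on_fun_upd_insert[OF assms(4,2) \<open>v \<notin> b ` V\<close>] less] by blast
  qed
qed

lemma extension_below_minimum:
  assumes "finite V" "x \<notin> V" "R \<subseteq> insert x V \<times> V" "inj_on b V"
    "\<forall>(i, j)\<in>R. i \<noteq> x \<longrightarrow> b i < b j"
  obtains v where "inj_on (b(x := v)) (insert x V)" "\<forall>(i, j)\<in>R. (b(x := v)) i < (b(x := v)) j"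
    "card (R \<inter> adjacent_pairs (insert x V) (b(x := v)))
       \<le> card ({(i, j) \<in> R. i \<noteq> x} \<inter> adjacent_pairs V b) + 1"
proof
  define v where "v = Min (insert 0 (b ` V)) - 1"
  have below: "v < b k" if "k \<in> V" for k
  proof -
    have "Min (insert 0 (b ` V)) \<le> b k"
      by (rule Min_le) (use assms(1) that in auto)
    then show ?thesis
      by (simp add: v_def)
  qed
  let ?b = "b(x := v)" and ?V = "insert x V"
  have "v \<notin> b ` V"
    using below by (metis image_iff less_irrefl)
  then show "inj_on ?b ?V"
    by (rule inj_on_fun_upd_insert[OF assms(4,2)])
  show "\<forall>(i, j)\<in>R. ?b i < ?b j"
  proof clarify
    fix i j assume "(i, j) \<in> R"
    then have "j \<in> V" "j \<noteq> x"
      using assms(2,3) by auto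
    then show "?b i < ?b j"
      using assms(5) below \<open>(i, j) \<in> R\<close> by (cases "i = x") auto
  qed
  let ?R' = "{(i, j) \<in> R. i \<noteq> x}" and ?X = "{pq \<in> adjacent_pairs ?V ?b. fst pq = x}"
  have cover: "R \<inter> adjacent_pairs ?V ?b \<subseteq> (?R' \<inter> adjacent_pairs V b) \<union> ?X"
  proof
    fix pq assume pq: "pq \<in> R \<inter> adjacent_pairs ?V ?b"
    obtain i j where ij: "pq = (i, j)"
      by fastforce
    show "pq \<in> (?R' \<inter> adjacent_pairs V b) \<union> ?X"
    proof (cases "i = x")
      case False
      then have "i \<in> V" "j \<in> V"
        using pq ij assms(3) by auto
      then have "(i, j) \<in> adjacent_pairs V b"
        using adjacent_pairs_fun_upd_subset[OF assms(2)] pq ij by blast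
      then show ?thesis
        using pq ij False by simp
    qed (use pq ij in simp)
  qed
  have "card ?X \<le> 1"
  proof -
    have "inj_on fst ?X"
      by (rule inj_on_subset[OF inj_on_fst_adjacent_pairs[OF \<open>inj_on ?b ?V\<close>]]) blast
    moreover have "fst ` ?X \<subseteq> {x}"
      by blast
    ultimately show ?thesis
      using card_inj_on_le[of fst ?X "{x}"] by simp
  qed
  have "finite (adjacent_pairs V b)" "finite (adjacent_pairs ?V ?b)"
    using assms(1) by (simp_all add: finite_adjacent_pairs)
  then have "finite (?R' \<inter> adjacent_pairs V b \<union> ?X)"
    by (simp add: finite_Int)
  then have "card (R \<inter> adjacent_pairs ?V ?b) \<le> card (?R' \<inter> adjacent_pairs V b \<union> ?X)"
    using cover by (rule card_mono)
  also have "\<dots> \<le> card (?R' \<inter> adjacent_pairs V b) + card ?X"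
    by (rule card_Un_le)
  finally show "card (R \<inter> adjacent_pairs ?V ?b) \<le> card (?R' \<inter> adjacent_pairs V b) + 1"
    using \<open>card ?X \<le> 1\<close> by linarith
qed

lemma card_le_twice_card_if_covered:
  assumes "finite R" "V \<subseteq> fst ` R \<union> snd ` R"
  shows "card V \<le> 2 * card R"
proof -
  have "card V \<le> card (fst ` R \<union> snd ` R)"
    using assms by (intro card_mono) auto
  also have "\<dots> \<le> card (fst ` R) + card (snd ` R)"
    by (rule card_Un_le)
  also have "\<dots> \<le> 2 * card R"
    using card_image_le[OF assms(1), of fst] card_image_le[OF assms(1), of snd] by simp
  finally show ?thesis .
qed

lemma exists_extension_with_few_adjacent_pairs:
  fixes a :: "nat \<Rightarrow> 'a::order"
  assumes "finite V" "R \<subseteq> V \<times> V" "inj_on a V" "\<forall>(i, j)\<in>R. a i < a j"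
  shows "\<exists>b. inj_on b V \<and> (\<forall>(i, j)\<in>R. b i < b j) \<and>
    card (R \<inter> adjacent_pairs V b) \<le> 2 * card R + 1 - card V"
  using assms
proof (induction V arbitrary: R rule: finite_remove_induct)
  case empty
  then show ?case
    by auto
next
  case (remove V)
  have "finite R"
    using remove.hyps(1) remove.prems(1) finite_subset by blast
  have card_remove: "card (V - {x}) = card V - 1" "card V \<ge> 1" if "x \<in> V" for x
    using remove.hyps(1) that by (auto simp: card_gt_0_iff Suc_le_eq)
  show ?case
  proof (cases "\<exists>x\<in>V. \<forall>(i, j)\<in>R. i \<noteq> x \<and> j \<noteq> x")
    case True
    then obtain x where "x \<in> V" and isolated: "\<forall>(i, j)\<in>R. i \<noteq> x \<and> j \<noteq> x"
      by blast
    have "R \<subseteq> (V - {x}) \<times> (V - {x})"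
      using remove.prems(1) isolated by auto
    then obtain b where b: "inj_on b (V - {x})" "\<forall>(i, j)\<in>R. b i < b j"
      "card (R \<inter> adjacent_pairs (V - {x}) b) \<le> 2 * card R + 1 - card (V - {x})"
      using remove.IH[OF \<open>x \<in> V\<close>] remove.prems(2,3) inj_on_subset[of a V "V - {x}"] by blast
    obtain v where v: "inj_on (b(x := v)) V" "\<forall>(i, j)\<in>R. (b(x := v)) i < (b(x := v)) j"
      "card (R \<inter> adjacent_pairs V (b(x := v))) \<le> card (R \<inter> adjacent_pairs (V - {x}) b) - 1"
      using extension_at_isolated_point[of "V - {x}" x R b] remove.hyps(1) \<open>x \<in> V\<close>
        \<open>R \<subseteq> (V - {x}) \<times> (V - {x})\<close> b(1,2) insert_Diff[OF \<open>x \<in> V\<close>]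
      by (auto simp del: inj_on_insert)
    have "card (R \<inter> adjacent_pairs V (b(x := v))) \<le> 2 * card R + 1 - card V"
      using b(3) v(3) card_remove[OF \<open>x \<in> V\<close>] by linarith
    then show ?thesis
      using v(1,2) by blast
  next
    case False
    then have covered: "V \<subseteq> fst ` R \<union> snd ` R"
      by force
    have "card V \<le> 2 * card R"
      using card_le_twice_card_if_covered[OF \<open>finite R\<close> covered] .
    obtain x where "x \<in> V" and minimal: "\<And>k. k \<in> V \<Longrightarrow> \<not> a k < a x"
      using ex_min_if_finite[of "a ` V"] remove.hyps(1,2) by fastforce
    have no_pred: "(i, x) \<notin> R" for i
      using remove.prems(1,3) minimal by blast
    then obtain q where "(x, q) \<in> R"
      using covered \<open>x \<in> V\<close> by force
    define R' where "R' = {(i, j) \<in> R. i \<noteq> x}"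
    have "R' \<subseteq> (V - {x}) \<times> (V - {x})"
      using remove.prems(1) no_pred by (fastforce simp: R'_def)
    have "card R' < card R"
      using \<open>finite R\<close> \<open>(x, q) \<in> R\<close> by (intro psubset_card_mono) (auto simp: R'_def)
    obtain b where b: "inj_on b (V - {x})" "\<forall>(i, j)\<in>R'. b i < b j"
      "card (R' \<inter> adjacent_pairs (V - {x}) b) \<le> 2 * card R' + 1 - card (V - {x})"
      using remove.IH[OF \<open>x \<in> V\<close> \<open>R' \<subseteq> (V - {x}) \<times> (V - {x})\<close>] remove.prems(2,3)
        inj_on_subset[of a V "V - {x}"] by (auto simp: R'_def)
    have "R \<subseteq> insert x (V - {x}) \<times> (V - {x})"
      using remove.prems(1) no_pred by fastforce
    moreover have "\<forall>(i, j)\<in>R. i \<noteq> x \<longrightarrow> b i < b j"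
      using b(2) by (auto simp: R'_def)
    ultimately obtain v where v: "inj_on (b(x := v)) V" "\<forall>(i, j)\<in>R. (b(x := v)) i < (b(x := v)) j"
      "card (R \<inter> adjacent_pairs V (b(x := v))) \<le> card (R' \<inter> adjacent_pairs (V - {x}) b) + 1"
      using extension_below_minimum[of "V - {x}" x R b] remove.hyps(1) b(1)
      unfolding insert_Diff[OF \<open>x \<in> V\<close>] R'_def by blast
    have "card (R \<inter> adjacent_pairs V (b(x := v))) \<le> 2 * card R + 1 - card V"
      using b(3) v(3) card_remove[OF \<open>x \<in> V\<close>] \<open>card R' < card R\<close> \<open>card V \<le> 2 * card R\<close>
      by linarith
    then show ?thesis
      using v(1,2) by blast
  qed
qed

lemma not_determined_if_card_less:
  assumes "consistent n R a" "R \<subseteq> {..<n} \<times> {..<n}" "card R < n - 1"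
  shows "\<not> determined n R"
proof
  assume "determined n R"
  then have "adjacent_pairs {..<n} a \<subseteq> R"
    using determined_iff_adjacent_pairs_subset[OF assms(1,2)] by blast
  moreover have "finite R"
    using assms(2) finite_subset by blast
  ultimately have "card (adjacent_pairs {..<n} a) \<le> card R"
    by (rule card_mono[rotated])
  moreover have "card (adjacent_pairs {..<n} a) = n - 1"
    using assms(1) card_adjacent_pairs[of "{..<n}" a] by (simp add: consistent_def sort_input_def)
  ultimately show False
    using assms(3) by simp
qed

lemma exists_change_defeating_questioner:
  assumes "consistent n R a" "R \<subseteq> {..<n} \<times> {..<n}" "2 * card R < n" "m < n - 1"
  shows "\<exists>b. b \<noteq> a \<and> consistent n R b \<and> \<not> win n m R b 0"
proof -
  have "inj_on a {..<n}" "\<forall>(i, j)\<in>R. a i < a j"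
    using assms(1) by (simp_all add: consistent_def sort_input_def)
  then obtain b where b: "inj_on b {..<n}" "\<forall>(i, j)\<in>R. b i < b j"
    "card (R \<inter> adjacent_pairs {..<n} b) \<le> 2 * card R + 1 - n"
    using exists_extension_with_few_adjacent_pairs[of "{..<n}" R a] assms(2) by auto
  \<comment> \<open>A change must give a different function on all of \<open>nat\<close>, so \<open>b\<close> is altered outside \<open>{..<n}\<close>.\<close>
  define b' where "b' = b(n := a n + 1)"
  have agree: "b' k = b k" if "k \<in> {..<n}" for k
    using that by (simp add: b'_def)
  have "b' n \<noteq> a n"
    by (simp add: b'_def)
  then have "b' \<noteq> a"
    by auto
  have "inj_on b' {..<n}"
    using b(1) inj_on_cong[of "{..<n}" b' b] agree by simp
  moreover have "\<forall>(i, j)\<in>R. b' i < b' j"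
  proof clarify
    fix i j assume "(i, j) \<in> R"
    then have "i < n" "j < n"
      using assms(2) by auto
    then show "b' i < b' j"
      using b(2) agree \<open>(i, j) \<in> R\<close> by auto
  qed
  ultimately have "consistent n R b'"
    by (simp add: consistent_def sort_input_def)
  have "R \<inter> adjacent_pairs {..<n} b = {}"
    using b(3) assms(3) finite_adjacent_pairs[of "{..<n}" b] by simp
  moreover have "adjacent_pairs {..<n} b' = adjacent_pairs {..<n} b"
    using agree by (rule adjacent_pairs_cong)
  ultimately have "adjacent_pairs {..<n} b' - R = adjacent_pairs {..<n} b'"
    by auto
  then have "card (adjacent_pairs {..<n} b' - R) = n - 1"
    using card_adjacent_pairs[OF finite_lessThan \<open>inj_on b' {..<n}\<close>] by simp
  then have "\<not> win n m R b' 0"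
    using win_without_change_iff[OF \<open>consistent n R b'\<close> assms(2)] assms(4) by simp
  then show ?thesis
    using \<open>b' \<noteq> a\<close> \<open>consistent n R b'\<close> by blast
qed

lemma not_win_before_change:
  assumes "consistent n R a" "R \<subseteq> {..<n} \<times> {..<n}" "card R < (n - 1) div 2"
    "m + card R < n - 1 + (n - 1) div 2"
  shows "\<not> win n m R a 1"
  using assms
proof (induction m arbitrary: R)
  case 0
  then show ?case
    using not_determined_if_card_less[OF 0(1,2)] by simp
next
  case (Suc m)
  have "\<not> (win n m (insert (answer a i j) R) a 1 \<and>
      (\<forall>b. consistent n (insert (answer a i j) R) b \<and> b \<noteq> a \<longrightarrow>
         win n m (insert (answer a i j) R) b 0))"
    if "i < n" "j < n" "i \<noteq> j" for i j
  proof -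
    let ?R = "insert (answer a i j) R"
    have R: "consistent n ?R a" "?R \<subseteq> {..<n} \<times> {..<n}"
      using consistent_insert_answer[OF Suc.prems(1) that] answer_in_square[OF that(1,2)]
        Suc.prems(2) by auto
    have "finite R"
      using Suc.prems(2) finite_subset by blast
    then have "card ?R \<le> Suc (card R)"
      by (simp add: card_insert_if)
    show ?thesis
    proof (cases "card ?R < (n - 1) div 2")
      case True
      then show ?thesis
        using Suc.IH[OF R] Suc.prems(4) \<open>card ?R \<le> Suc (card R)\<close> by simp
    next
      case False
      then have "2 * card ?R < n" "m < n - 1"
        using Suc.prems(3,4) \<open>card ?R \<le> Suc (card R)\<close> by linarith+
      then show ?thesis
        using exists_change_defeating_questioner[OF R] by blast
    qed
  qed
  moreover have "\<not> determined n R"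
    using not_determined_if_card_less[OF Suc.prems(1,2)] Suc.prems(3) by simp
  ultimately show ?case
    unfolding win_Suc_one_change by blast
qed

lemma win_lower_bound:
  assumes "sort_input n a" "m < n - 1 + (n - 1) div 2"
  shows "\<not> win n m {} a 1"
proof (cases "(n - 1) div 2 = 0")
  case True
  then have "m = 0" "0 < n - 1"
    using assms(2) by simp_all
  then show ?thesis
    using not_determined_if_card_less[of n "{}" a] assms(1) by (simp add: consistent_def)
next
  case False
  then show ?thesis
    using not_win_before_change[of n "{}" a m] assms by (simp add: consistent_def)
qed

lemma ceiling_three_halves:
  assumes "1 \<le> n"
  shows "int (n - 1 + (n - 1) div 2) = \<lceil>3 * real n / 2\<rceil> - 2"
proof -
  have "\<lceil>3 * real n / 2\<rceil> = \<lceil>of_int (int (3 * n)) / of_int 2 :: real\<rceil>"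
    by simp
  also have "\<dots> = - (- int (3 * n) div 2)"
    by (rule ceiling_divide_eq_div)
  finally show ?thesis
    using assms by presburger
qed

theorem proposition4:
  fixes n :: nat
  assumes "n \<ge> 1"
  shows "int (D 1 n) = \<lceil>3 * real n / 2\<rceil> - 2"
proof -
  have "D 1 n = n - 1 + (n - 1) div 2"
    unfolding D_def
  proof (rule Least_equality)
    show "\<forall>a. sort_input n a \<longrightarrow> win n (n - 1 + (n - 1) div 2) {} a 1"
      using win_upper_bound by blast
  next
    fix m assume "\<forall>a. sort_input n a \<longrightarrow> win n m {} a 1"
    moreover have "sort_input n real"
      by (simp add: sort_input_def inj_on_def)
    ultimately show "n - 1 + (n - 1) div 2 \<le> m"
      using win_lower_bound[of n real m] by (meson not_le)
  qed
  then show ?thesis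
    using ceiling_three_halves[OF assms] by simp
qed

end
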